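(* Let $f_1,\dots,f_n:\mathbb{R}^d\to\mathbb{R}$ be such that each $f_i$ is $L_i$-smooth and has a minimizer $x_i$, let $\alpha_1,\dots,\alpha_n\in(0,1)$ and $\tilde f(x) = \frac{1}{n}\sum_{i=1}^n f_i(\alpha_i x + (1-\alpha_i)x_i)$. Then for every $x\in\mathbb{R}^d$, \[ \|\nabla \tilde f(x)\| \leq \frac{1}{n}\sum_{i=1}^n \alpha_i^2 L_i\|x - x_i\| \quad\text{and}\quad \tilde f(x) \leq \frac{1}{n}\sum_{i=1}^n f_i(x_i) + \frac{1}{2n}\sum_{i=1}^n\alpha_i^2 L_i\|x-x_i\|^2. \]
   Context: A differentiable $g$ is $L$-smooth if $\|\nabla g(x)-\nabla g(y)\|\leq L\|x-y\|$ for all $x,y$. *)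

theory Defs
  imports "HOL-Analysis.Analysis"
begin

text \<open>The gradient of a real-valued function at a point (Riesz representative of the
Frechet derivative); it is well defined whenever the function is differentiable there.\<close>
definition grad :: "('a::real_inner \<Rightarrow> real) \<Rightarrow> 'a \<Rightarrow> 'a" where
  "grad f x = (THE D. GDERIV f x :> D)"

definition L_smooth :: "real \<Rightarrow> ('a::real_inner \<Rightarrow> real) \<Rightarrow> bool" where
  "L_smooth L g \<longleftrightarrow> (\<forall>x. g differentiable (at x)) \<and>
     (\<forall>x y. norm (grad g x - grad g y) \<le> L * norm (x - y))"

end

(*
  Rescaling towards a minimiser preserves both smoothness and the minimiser:
  z \<mapsto> f (a z + (1 - a) x\<^sub>0) is a\<^sup>2 L-smooth and still minimal at x\<^sub>0.
  For an L-smooth f minimal at x\<^sub>0 the gradient vanishes there, so Lipschitz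
  continuity gives |\<nabla>f y| \<le> L |y - x\<^sub>0| and the descent lemma at x\<^sub>0 gives
  f y \<le> f x\<^sub>0 + L/2 |y - x\<^sub>0|\<^sup>2. Averaging these bounds over the summands (the
  gradient is linear, the norm subadditive) yields both claims.
*)
theory Submission
  imports Defs
begin

lemma grad_eqI:
  assumes "GDERIV f x :> D"
  shows "grad f x = D"
  unfolding grad_def
proof (rule the_equality)
  fix D' assume "GDERIV f x :> D'"
  then have "(\<lambda>h. h \<bullet> D') = (\<lambda>h. h \<bullet> D)"
    using assms unfolding gderiv_def by (rule has_derivative_unique)
  then show "D' = D"
    by (metis vector_eq_ldot)
qed (rule assms)

lemma GDERIV_grad:
  fixes f :: "'a::euclidean_space \<Rightarrow> real"
  assumes "f differentiable at x"
  shows "GDERIV f x :> grad f x"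
proof -
  obtain f' where f': "(f has_derivative f') (at x)"
    using assms differentiable_def by blast
  \<comment> \<open>The Riesz representative of a linear functional is its adjoint evaluated at 1.\<close>
  have "f' = (\<lambda>h. h \<bullet> adjoint f' 1)"
    using adjoint_works[OF has_derivative_linear[OF f']] by simp
  with f' have "GDERIV f x :> adjoint f' 1"
    unfolding gderiv_def by simp
  then show ?thesis
    by (simp add: grad_eqI)
qed

lemma grad_eq_0_at_minimum:
  fixes f :: "'a::euclidean_space \<Rightarrow> real"
  assumes "f differentiable at x" and "\<And>y. f x \<le> f y"
  shows "grad f x = 0"
proof -
  have "(\<lambda>h. h \<bullet> grad f x) = (\<lambda>h. 0)"
    using GDERIV_grad[OF assms(1)] assms(2) unfolding gderiv_def
    by (simp add: has_derivative_local_min)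
  then show ?thesis
    by (metis inner_eq_zero_iff)
qed

lemma GDERIV_compose_affine:
  fixes f :: "'a::euclidean_space \<Rightarrow> real"
  assumes "f differentiable at (a *\<^sub>R x + b)"
  shows "GDERIV (\<lambda>z. f (a *\<^sub>R z + b)) x :> a *\<^sub>R grad f (a *\<^sub>R x + b)"
proof -
  have "((\<lambda>z. a *\<^sub>R z + b) has_derivative (\<lambda>h. a *\<^sub>R h)) (at x)"
    by (auto intro!: derivative_eq_intros)
  from has_derivative_compose[OF this GDERIV_grad[OF assms, unfolded gderiv_def]]
  show ?thesis
    unfolding gderiv_def by (simp add: mult.commute)
qed

lemma grad_cmult_sum:
  fixes g :: "'i \<Rightarrow> 'a::euclidean_space \<Rightarrow> real"
  assumes "\<And>i. i \<in> I \<Longrightarrow> g i differentiable at x"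
  shows "grad (\<lambda>z. c * (\<Sum>i\<in>I. g i z)) x = c *\<^sub>R (\<Sum>i\<in>I. grad (g i) x)"
proof (rule grad_eqI)
  have "((\<lambda>z. c * (\<Sum>i\<in>I. g i z)) has_derivative (\<lambda>h. c * (\<Sum>i\<in>I. h \<bullet> grad (g i) x))) (at x)"
    using GDERIV_grad[OF assms] unfolding gderiv_def
    by (intro has_derivative_mult_right has_derivative_sum)
  then show "GDERIV (\<lambda>z. c * (\<Sum>i\<in>I. g i z)) x :> c *\<^sub>R (\<Sum>i\<in>I. grad (g i) x)"
    unfolding gderiv_def by (simp add: inner_sum_right)
qed

lemma L_smooth_compose_affine:
  fixes f :: "'a::euclidean_space \<Rightarrow> real"
  assumes "L_smooth L f"
  shows "L_smooth (a\<^sup>2 * L) (\<lambda>z. f (a *\<^sub>R z + b))"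
  unfolding L_smooth_def
proof (intro conjI allI)
  have diff: "\<And>z. f differentiable at z"
    and lip: "\<And>z w. norm (grad f z - grad f w) \<le> L * norm (z - w)"
    using assms unfolding L_smooth_def by auto
  fix x y :: 'a
  show "(\<lambda>z. f (a *\<^sub>R z + b)) differentiable at x"
    using GDERIV_compose_affine[OF diff] unfolding gderiv_def by (rule differentiableI)
  have "grad (\<lambda>z. f (a *\<^sub>R z + b)) x - grad (\<lambda>z. f (a *\<^sub>R z + b)) y
      = a *\<^sub>R (grad f (a *\<^sub>R x + b) - grad f (a *\<^sub>R y + b))"
    by (simp add: grad_eqI[OF GDERIV_compose_affine[OF diff]] scaleR_diff_right)
  then have "norm (grad (\<lambda>z. f (a *\<^sub>R z + b)) x - grad (\<lambda>z. f (a *\<^sub>R z + b)) y)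
      = \<bar>a\<bar> * norm (grad f (a *\<^sub>R x + b) - grad f (a *\<^sub>R y + b))"
    by simp
  also have "\<dots> \<le> \<bar>a\<bar> * (L * norm (a *\<^sub>R (x - y)))"
    using lip[of "a *\<^sub>R x + b" "a *\<^sub>R y + b"] by (simp add: mult_left_mono scaleR_diff_right)
  also have "\<dots> = a\<^sup>2 * L * norm (x - y)"
    by (simp add: power2_eq_square abs_mult_self_eq)
  finally show "norm (grad (\<lambda>z. f (a *\<^sub>R z + b)) x - grad (\<lambda>z. f (a *\<^sub>R z + b)) y)
      \<le> a\<^sup>2 * L * norm (x - y)" .
qed

lemma L_smooth_descent:
  fixes f :: "'a::euclidean_space \<Rightarrow> real"
  assumes "L_smooth L f"
  shows "f y \<le> f x + grad f x \<bullet> (y - x) + L / 2 * (norm (y - x))\<^sup>2"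
proof -
  have diff: "\<And>z. f differentiable at z"
    and lip: "\<And>z w. norm (grad f z - grad f w) \<le> L * norm (z - w)"
    using assms unfolding L_smooth_def by auto
  define h where "h = y - x"
  define p where "p t = x + t *\<^sub>R h" for t
  \<comment> \<open>Along the segment, f minus the claimed quadratic bound is nonincreasing.\<close>
  define g where "g = (\<lambda>t. f (p t) - t * (grad f x \<bullet> h) - L / 2 * t\<^sup>2 * (norm h)\<^sup>2)"
  have "g 1 \<le> g 0"
  proof (rule DERIV_nonpos_imp_nonincreasing[of 0 1 g])
    fix t :: real assume t: "0 \<le> t" "t \<le> 1"
    have "(p has_derivative (\<lambda>s. s *\<^sub>R h)) (at t)"
      unfolding p_def by (auto intro!: derivative_eq_intros)
    from has_derivative_compose[OF this GDERIV_grad[OF diff, unfolded gderiv_def]]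
    have fp: "DERIV (\<lambda>t. f (p t)) t :> h \<bullet> grad f (p t)"
      by (simp add: has_field_derivative_def mult_commute_abs)
    have "DERIV g t :> h \<bullet> grad f (p t) - grad f x \<bullet> h - L / 2 * (2 * t) * (norm h)\<^sup>2"
      unfolding g_def by (rule derivative_eq_intros fp refl | simp)+
    moreover have "h \<bullet> grad f (p t) - grad f x \<bullet> h \<le> L / 2 * (2 * t) * (norm h)\<^sup>2"
    proof -
      have "h \<bullet> grad f (p t) - grad f x \<bullet> h = h \<bullet> (grad f (p t) - grad f x)"
        by (simp add: inner_diff_right inner_commute)
      also have "\<dots> \<le> norm h * norm (grad f (p t) - grad f x)"
        by (rule norm_cauchy_schwarz)
      also have "\<dots> \<le> norm h * (L * norm (t *\<^sub>R h))"
        using lip[of "p t" x] by (simp add: p_def mult_left_mono)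
      also have "\<dots> = L / 2 * (2 * t) * (norm h)\<^sup>2"
        using t by (simp add: power2_eq_square)
      finally show ?thesis .
    qed
    ultimately show "\<exists>d. DERIV g t :> d \<and> d \<le> 0"
      by (intro exI conjI) auto
  qed simp
  then show ?thesis
    unfolding g_def p_def h_def by (simp add: inner_commute)
qed

lemma L_smooth_le_minimum_plus:
  fixes f :: "'a::euclidean_space \<Rightarrow> real"
  assumes "L_smooth L f" and "\<And>y. f x\<^sub>0 \<le> f y"
  shows "f y \<le> f x\<^sub>0 + L / 2 * (norm (y - x\<^sub>0))\<^sup>2"
proof -
  have "grad f x\<^sub>0 = 0"
    using assms unfolding L_smooth_def by (blast intro: grad_eq_0_at_minimum)
  with L_smooth_descent[OF assms(1), of y x\<^sub>0] show ?thesis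
    by simp
qed

lemma L_smooth_norm_grad_le:
  fixes f :: "'a::euclidean_space \<Rightarrow> real"
  assumes "L_smooth L f" and "\<And>y. f x\<^sub>0 \<le> f y"
  shows "norm (grad f y) \<le> L * norm (y - x\<^sub>0)"
proof -
  have "grad f x\<^sub>0 = 0"
    using assms unfolding L_smooth_def by (blast intro: grad_eq_0_at_minimum)
  moreover have "norm (grad f y - grad f x\<^sub>0) \<le> L * norm (y - x\<^sub>0)"
    using assms(1) unfolding L_smooth_def by blast
  ultimately show ?thesis
    by simp
qed

theorem lemma1:
  fixes f :: "nat \<Rightarrow> 'a::euclidean_space \<Rightarrow> real"
    and L :: "nat \<Rightarrow> real" and xs :: "nat \<Rightarrow> 'a" and \<alpha> :: "nat \<Rightarrow> real"
    and n :: nat and x :: 'a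
  assumes "n \<ge> 1"
    and smooth: "\<And>i. i \<in> {1..n} \<Longrightarrow> L_smooth (L i) (f i)"
    and minim: "\<And>i y. i \<in> {1..n} \<Longrightarrow> f i (xs i) \<le> f i y"
    and alpha: "\<And>i. i \<in> {1..n} \<Longrightarrow> 0 < \<alpha> i \<and> \<alpha> i < 1"
  defines "ft \<equiv> (\<lambda>z. (1 / real n) * (\<Sum>i=1..n. f i (\<alpha> i *\<^sub>R z + (1 - \<alpha> i) *\<^sub>R xs i)))"
  shows "norm (grad ft x) \<le> (1 / real n) * (\<Sum>i=1..n. (\<alpha> i)\<^sup>2 * L i * norm (x - xs i))
       \<and> ft x \<le> (1 / real n) * (\<Sum>i=1..n. f i (xs i))
                + (1 / (2 * real n)) * (\<Sum>i=1..n. (\<alpha> i)\<^sup>2 * L i * (norm (x - xs i))\<^sup>2)"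
proof
  define g where "g i = (\<lambda>z. f i (\<alpha> i *\<^sub>R z + (1 - \<alpha> i) *\<^sub>R xs i))" for i
  have ft_eq: "ft = (\<lambda>z. (1 / real n) * (\<Sum>i=1..n. g i z))"
    unfolding ft_def g_def ..
  have g_xs: "g i (xs i) = f i (xs i)" for i
    unfolding g_def by (simp add: algebra_simps)
  have g_smooth: "L_smooth ((\<alpha> i)\<^sup>2 * L i) (g i)" if "i \<in> {1..n}" for i
    unfolding g_def using smooth[OF that] by (rule L_smooth_compose_affine)
  have g_min: "g i (xs i) \<le> g i z" if "i \<in> {1..n}" for i z
    unfolding g_xs by (simp add: g_def minim[OF that])
  have "grad ft x = (1 / real n) *\<^sub>R (\<Sum>i=1..n. grad (g i) x)"
    unfolding ft_eq using g_smooth unfolding L_smooth_def by (blast intro: grad_cmult_sum)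
  then have "norm (grad ft x) \<le> (1 / real n) * (\<Sum>i=1..n. norm (grad (g i) x))"
    by (simp add: norm_sum divide_right_mono)
  also have "\<dots> \<le> (1 / real n) * (\<Sum>i=1..n. (\<alpha> i)\<^sup>2 * L i * norm (x - xs i))"
    using L_smooth_norm_grad_le[OF g_smooth g_min]
    by (intro mult_left_mono sum_mono) auto
  finally show "norm (grad ft x) \<le> (1 / real n) * (\<Sum>i=1..n. (\<alpha> i)\<^sup>2 * L i * norm (x - xs i))" .
  have "ft x \<le> (1 / real n) * (\<Sum>i=1..n. f i (xs i) + 1 / 2 * ((\<alpha> i)\<^sup>2 * L i * (norm (x - xs i))\<^sup>2))"
    unfolding ft_eq using L_smooth_le_minimum_plus[OF g_smooth g_min] g_xs
    by (intro mult_left_mono sum_mono) auto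
  also have "\<dots> = (1 / real n) * (\<Sum>i=1..n. f i (xs i))
                + (1 / (2 * real n)) * (\<Sum>i=1..n. (\<alpha> i)\<^sup>2 * L i * (norm (x - xs i))\<^sup>2)"
    by (simp add: sum.distrib ring_distribs flip: sum_distrib_left sum_divide_distrib)
  finally show "ft x \<le> (1 / real n) * (\<Sum>i=1..n. f i (xs i))
                + (1 / (2 * real n)) * (\<Sum>i=1..n. (\<alpha> i)\<^sup>2 * L i * (norm (x - xs i))\<^sup>2)" .
qed

end
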